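(* For any optimal packing of a finite multiset of items into a finite sequence of bins, there is an optimal thrifty packing of those items into that sequence that uses the same set of bins.
   Context: Grid Scheduling setting: items have positive integer sizes; bins have positive integer sizes and form a sequence. A packing assigns every item to a bin such that the total size of items in each bin is at most the bin's size. A bin is used if it receives at least one item; the cost of a packing is the sum of the sizes of its used bins. A packing is valid if each empty bin is smaller than every item packed in a later bin. A packing is optimal if it is valid and has minimum cost among all valid packings of the same items into the same sequence. A bin is wasteful if its empty space is at least the size of some item packed in a later bin; a packing is thrifty if it has no wasteful bin. *)

theory Defs
  imports Main
begin

text \<open>Items are given by a list of sizes (item i has size items ! i; the list
represents the multiset, with items distinguished by position); bins are given by
a list of sizes (bin j has size bins ! j, in sequence order).\<close>

definition load :: "nat list \<Rightarrow> (nat \<Rightarrow> nat) \<Rightarrow> nat \<Rightarrow> nat" where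
  "load items p j = (\<Sum>i\<in>{i. i < length items \<and> p i = j}. items ! i)"

definition is_packing :: "nat list \<Rightarrow> nat list \<Rightarrow> (nat \<Rightarrow> nat) \<Rightarrow> bool" where
  "is_packing bins items p \<longleftrightarrow>
     (\<forall>i<length items. p i < length bins) \<and>
     (\<forall>j<length bins. load items p j \<le> bins ! j)"

definition used_bins :: "nat list \<Rightarrow> nat list \<Rightarrow> (nat \<Rightarrow> nat) \<Rightarrow> nat set" where
  "used_bins bins items p = {j. j < length bins \<and> (\<exists>i<length items. p i = j)}"

definition cost :: "nat list \<Rightarrow> nat list \<Rightarrow> (nat \<Rightarrow> nat) \<Rightarrow> nat" where
  "cost bins items p = (\<Sum>j\<in>used_bins bins items p. bins ! j)"

definition valid_packing :: "nat list \<Rightarrow> nat list \<Rightarrow> (nat \<Rightarrow> nat) \<Rightarrow> bool" where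
  "valid_packing bins items p \<longleftrightarrow> is_packing bins items p \<and>
     (\<forall>j<length bins. j \<notin> used_bins bins items p \<longrightarrow>
        (\<forall>i<length items. j < p i \<longrightarrow> bins ! j < items ! i))"

definition optimal_packing :: "nat list \<Rightarrow> nat list \<Rightarrow> (nat \<Rightarrow> nat) \<Rightarrow> bool" where
  "optimal_packing bins items p \<longleftrightarrow> valid_packing bins items p \<and>
     (\<forall>q. valid_packing bins items q \<longrightarrow> cost bins items p \<le> cost bins items q)"

definition wasteful :: "nat list \<Rightarrow> nat list \<Rightarrow> (nat \<Rightarrow> nat) \<Rightarrow> nat \<Rightarrow> bool" where
  "wasteful bins items p j \<longleftrightarrow>
     (\<exists>i<length items. j < p i \<and> items ! i \<le> bins ! j - load items p j)"

definition thrifty :: "nat list \<Rightarrow> nat list \<Rightarrow> (nat \<Rightarrow> nat) \<Rightarrow> bool" where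
  "thrifty bins items p \<longleftrightarrow> (\<forall>j<length bins. \<not> wasteful bins items p j)"

end

theory Submission
  imports Defs
begin

(* Let U be the set of bins used by the optimal packing p.
   Call a packing q U-confined if it puts every item into a bin of U and every
   bin outside U is smaller than every item q places in a later bin; p itself is
   U-confined.  Among all U-confined packings choose one, q, minimising the
   potential "sum of the bin indices of all items".  Moving an item into an
   earlier bin of U where it fits keeps the packing U-confined and lowers the
   potential, so no such move exists in q.  Hence q has no wasteful bin (bins
   of U admit no move, bins outside U are empty and smaller than every later
   item) and q is valid (an unused bin of U is empty, so it would admit a move).
   Since q uses only bins of U and is no cheaper than the optimum p, and bin
   sizes are positive, q uses all of U; so q is optimal, thrifty, and uses the
   same bins as p. *)

lemma load_move_target:
  assumes "i < length items" and "q i \<noteq> j"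
  shows "load items (q(i := j)) j = load items q j + items ! i"
proof -
  have "{i'. i' < length items \<and> (q(i := j)) i' = j} = insert i {i'. i' < length items \<and> q i' = j}"
    using assms by auto
  moreover have "i \<notin> {i'. i' < length items \<and> q i' = j}" using assms by auto
  ultimately show ?thesis unfolding load_def by simp
qed

lemma load_move_other:
  assumes "k \<noteq> j"
  shows "load items (q(i := j)) k \<le> load items q k"
proof -
  have "{i'. i' < length items \<and> (q(i := j)) i' = k} \<subseteq> {i'. i' < length items \<and> q i' = k}"
    using assms by auto
  then show ?thesis unfolding load_def by (intro sum_mono2) auto
qed

lemma load_unused:
  assumes "\<forall>i<length items. q i \<noteq> j"
  shows "load items q j = 0"
  using assms unfolding load_def by auto

lemma packing_move:
  assumes pack: "is_packing bins items q" and i: "i < length items"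
    and j: "j < length bins" and ji: "q i \<noteq> j"
    and fit: "items ! i \<le> bins ! j - load items q j"
  shows "is_packing bins items (q(i := j))"
  unfolding is_packing_def
proof (intro conjI allI impI)
  fix k assume k: "k < length bins"
  show "load items (q(i := j)) k \<le> bins ! k"
  proof (cases "k = j")
    case True
    have "load items q j \<le> bins ! j" using pack j unfolding is_packing_def by auto
    then show ?thesis using load_move_target[of i items q j] i ji fit True by simp
  next
    case False
    then show ?thesis
      using load_move_other[of k j items q i] pack k unfolding is_packing_def by fastforce
  qed
next
  fix i' assume "i' < length items"
  then show "(q(i := j)) i' < length bins" using pack j unfolding is_packing_def by auto
qed

definition confined :: "nat list \<Rightarrow> nat list \<Rightarrow> nat set \<Rightarrow> (nat \<Rightarrow> nat) \<Rightarrow> bool" where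
  "confined bins items U q \<longleftrightarrow> is_packing bins items q \<and> (\<forall>i<length items. q i \<in> U) \<and>
     (\<forall>e<length bins. e \<notin> U \<longrightarrow> (\<forall>i<length items. e < q i \<longrightarrow> bins ! e < items ! i))"

lemma valid_confined_used:
  assumes "valid_packing bins items p"
  shows "confined bins items (used_bins bins items p) p"
  using assms unfolding confined_def valid_packing_def used_bins_def is_packing_def by auto

lemma confined_used_subset:
  assumes "confined bins items U q"
  shows "used_bins bins items q \<subseteq> U"
  using assms unfolding confined_def used_bins_def by auto

lemma confined_move:
  assumes conf: "confined bins items U q" and i: "i < length items"
    and j: "j \<in> U" "j < length bins" and ji: "j < q i"
    and fit: "items ! i \<le> bins ! j - load items q j"
  shows "confined bins items U (q(i := j))"
proof -
  have "is_packing bins items (q(i := j))"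
    using conf i j ji fit by (intro packing_move) (auto simp: confined_def)
  moreover have "\<forall>e<length bins. e \<notin> U \<longrightarrow>
      (\<forall>i'<length items. e < (q(i := j)) i' \<longrightarrow> bins ! e < items ! i')"
  proof (intro allI impI)
    fix e i' assume "e < length bins" "e \<notin> U" "i' < length items" "e < (q(i := j)) i'"
    moreover have "(q(i := j)) i' \<le> q i'" using ji by simp
    ultimately show "bins ! e < items ! i'" using conf unfolding confined_def by auto
  qed
  ultimately show ?thesis using conf j unfolding confined_def by auto
qed

definition potential :: "nat list \<Rightarrow> (nat \<Rightarrow> nat) \<Rightarrow> nat" where
  "potential items q = (\<Sum>i<length items. q i)"

lemma potential_move_less:
  assumes "i < length items" and "j < q i"
  shows "potential items (q(i := j)) < potential items q"
  unfolding potential_def by (rule sum_strict_mono_ex1) (use assms in auto)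

definition minimal_confined :: "nat list \<Rightarrow> nat list \<Rightarrow> nat set \<Rightarrow> (nat \<Rightarrow> nat) \<Rightarrow> bool" where
  "minimal_confined bins items U q \<longleftrightarrow> confined bins items U q \<and>
     (\<forall>q'. confined bins items U q' \<longrightarrow> potential items q \<le> potential items q')"

lemma minimal_confined_exists:
  assumes "confined bins items U p"
  shows "\<exists>q. minimal_confined bins items U q"
  using ex_has_least_nat[of "confined bins items U" p "potential items"] assms
  unfolding minimal_confined_def by blast

lemma minimal_no_move:
  assumes min: "minimal_confined bins items U q" and U: "U \<subseteq> {..<length bins}"
    and i: "i < length items" and j: "j \<in> U" and ji: "j < q i"
  shows "bins ! j - load items q j < items ! i"
proof (rule ccontr)
  assume "\<not> bins ! j - load items q j < items ! i"
  then have "confined bins items U (q(i := j))"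
    using min U i j ji by (intro confined_move) (auto simp: minimal_confined_def)
  then have "potential items q \<le> potential items (q(i := j))"
    using min unfolding minimal_confined_def by blast
  then show False using potential_move_less[of i items j q] i ji by simp
qed

text \<open>Bins of U admit no move and bins outside U are empty and smaller than
  every later item, so a minimal confined packing is thrifty.\<close>
lemma minimal_confined_thrifty:
  assumes min: "minimal_confined bins items U q" and U: "U \<subseteq> {..<length bins}"
  shows "thrifty bins items q"
  unfolding thrifty_def wasteful_def
proof (intro allI impI notI)
  fix j assume j: "j < length bins"
    and "\<exists>i<length items. j < q i \<and> items ! i \<le> bins ! j - load items q j"
  then obtain i where i: "i < length items" "j < q i" "items ! i \<le> bins ! j - load items q j"
    by auto
  have conf: "confined bins items U q" using min unfolding minimal_confined_def by simp
  show False
  proof (cases "j \<in> U")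
    case True
    then show False using minimal_no_move[OF min U i(1) True i(2)] i(3) by simp
  next
    case False
    then have "load items q j = 0"
      using conf unfolding confined_def by (intro load_unused) auto
    then show False using conf j False i unfolding confined_def by fastforce
  qed
qed

text \<open>An unused bin of U would admit a move, and the bins outside U satisfy
  the validity condition by confinement, so a minimal confined packing is valid.\<close>
lemma minimal_confined_valid:
  assumes min: "minimal_confined bins items U q" and U: "U \<subseteq> {..<length bins}"
  shows "valid_packing bins items q"
  unfolding valid_packing_def
proof (intro conjI allI impI)
  have conf: "confined bins items U q" using min unfolding minimal_confined_def by simp
  then show "is_packing bins items q" unfolding confined_def by simp
  fix e i assume e: "e < length bins" and unused: "e \<notin> used_bins bins items q"
    and i: "i < length items" and ei: "e < q i"
  show "bins ! e < items ! i"
  proof (cases "e \<in> U")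
    case False
    then show ?thesis using conf e i ei unfolding confined_def by auto
  next
    case True
    have "load items q e = 0" using unused e unfolding used_bins_def by (intro load_unused) auto
    then show ?thesis using minimal_no_move[OF min U i True ei] by simp
  qed
qed

lemma cost_subset_eq:
  fixes bins :: "nat list"
  assumes pos: "\<forall>b\<in>set bins. 0 < b" and U: "U \<subseteq> {..<length bins}"
    and sub: "V \<subseteq> U" and le: "(\<Sum>j\<in>U. bins ! j) \<le> (\<Sum>j\<in>V. bins ! j)"
  shows "V = U"
proof (rule ccontr)
  assume "V \<noteq> U"
  then obtain u where u: "u \<in> U - V" using sub by auto
  have "finite U" using U finite_subset by blast
  moreover have "0 < bins ! u" using pos u U by auto
  ultimately have "(\<Sum>j\<in>V. bins ! j) < (\<Sum>j\<in>U. bins ! j)"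
    using sum_strict_mono2[of U V u "\<lambda>j. bins ! j"] sub u by blast
  then show False using le by simp
qed

theorem corollary1:
  fixes bins items :: "nat list" and p :: "nat \<Rightarrow> nat"
  assumes "\<forall>b\<in>set bins. 0 < b"
    and "\<forall>x\<in>set items. 0 < x"
    and "optimal_packing bins items p"
  shows "\<exists>q. optimal_packing bins items q \<and> thrifty bins items q \<and>
             used_bins bins items q = used_bins bins items p"
proof -
  define U where "U = used_bins bins items p"
  have U: "U \<subseteq> {..<length bins}" unfolding U_def used_bins_def by auto
  have "valid_packing bins items p" using assms(3) unfolding optimal_packing_def by simp
  then obtain q where min: "minimal_confined bins items U q"
    using minimal_confined_exists valid_confined_used unfolding U_def by blast
  have valid: "valid_packing bins items q" using minimal_confined_valid[OF min U] .
  have thrifty: "thrifty bins items q" using minimal_confined_thrifty[OF min U] .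
  have "cost bins items p \<le> cost bins items q"
    using assms(3) valid unfolding optimal_packing_def by simp
  moreover have "used_bins bins items q \<subseteq> U"
    using min confined_used_subset unfolding minimal_confined_def by blast
  ultimately have same_bins: "used_bins bins items q = U"
    using cost_subset_eq[OF assms(1) U] unfolding cost_def U_def by blast
  then have "optimal_packing bins items q"
    using assms(3) valid unfolding optimal_packing_def cost_def U_def by simp
  with thrifty same_bins show ?thesis unfolding U_def by blast
qed

end
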